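(* The word problem for the Manturov group $G^2_3=\langle a,b,c\mid a^2=b^2=c^2=1,\ bca=acb,\ cab=bac,\ cba=abc\rangle$ is solvable.
   Context: $G^2_3$ is the Manturov $(2,3)$-group, with generators $a=a_{12}$, $b=a_{13}$, $c=a_{23}$; each generator is an involution, so every element is represented by a positive word in $a,b,c$. *)

theory Defs
  imports Main
begin

datatype gen = A | B | C   (* A = a_12, B = a_13, C = a_23 *)

type_synonym word = "gen list"

definition rels :: "(word \<times> word) set" where
  "rels = {([A,A],[]), ([B,B],[]), ([C,C],[]),
           ([B,C,A],[A,C,B]), ([C,A,B],[B,A,C]), ([C,B,A],[A,B,C])}"

text \<open>Equality in the group: the congruence on positive words generated by the relations
 (since every generator is an involution, the monoid presentation gives the group).\<close>
inductive weq :: "word \<Rightarrow> word \<Rightarrow> bool" where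
  weq_refl: "weq w w"
| weq_sym: "weq u v \<Longrightarrow> weq v u"
| weq_trans: "weq u v \<Longrightarrow> weq v w \<Longrightarrow> weq u w"
| weq_rel: "(l, r) \<in> rels \<Longrightarrow> weq (u @ l @ v) (u @ r @ v)"

datatype recf = Z | S | Id nat | Cn recf "recf list" | Pr recf recf | Mn recf

inductive eval :: "recf \<Rightarrow> nat list \<Rightarrow> nat \<Rightarrow> bool" where
  eval_Z: "eval Z xs 0"
| eval_S: "eval S (x # xs) (Suc x)"
| eval_Id: "i < length xs \<Longrightarrow> eval (Id i) xs (xs ! i)"
| eval_Cn: "list_all2 (\<lambda>g y. eval g xs y) gs ys \<Longrightarrow> eval f ys z \<Longrightarrow> eval (Cn f gs) xs z"
| eval_Pr0: "eval f xs z \<Longrightarrow> eval (Pr f g) (0 # xs) z"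
| eval_PrS: "eval (Pr f g) (n # xs) y \<Longrightarrow> eval g (n # y # xs) z \<Longrightarrow> eval (Pr f g) (Suc n # xs) z"
| eval_Mn: "eval f (n # xs) 0 \<Longrightarrow> (\<forall>m<n. \<exists>y. eval f (m # xs) y \<and> 0 < y) \<Longrightarrow> eval (Mn f) xs n"
monos list_all2_mono

text \<open>Injective encoding of words as natural numbers (base-4 digits 1,2,3).\<close>
fun gen_code :: "gen \<Rightarrow> nat" where
  "gen_code A = 1" | "gen_code B = 2" | "gen_code C = 3"

fun enc :: "word \<Rightarrow> nat" where
  "enc [] = 0"
| "enc (x # xs) = gen_code x + 4 * enc xs"

end

theory Submission
  imports Defs
begin

text \<open>For each generator x, the number of occurrences of x at even positions minus the number
  at odd positions is invariant under the relations: a square xx occupies one position of each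
  parity, and each relation xyz = zyx only exchanges two letters two places apart. The invariant is
  complete. The relations give xyz = zyx for all generators x, y, z (for repeated letters via the
  squares), so a letter can be moved two places to the left. If w = x w' is balanced, x also occurs
  at an odd position of w, i.e. at an even position of w'; moving that occurrence to the front of w'
  turns w into x x r = r, a shorter balanced word. Finally, on the base-4 code n of a word these
  counts are bounded sums over the digit positions i < n, hence primitive recursive.\<close>

lemma weq_append_context: "weq u v \<Longrightarrow> weq (p @ u @ q) (p @ v @ q)"
proof (induction rule: weq.induct)
  case (weq_refl w)
  show ?case by (rule weq.weq_refl)
next
  case (weq_sym u v)
  show ?case using weq_sym.IH by (rule weq.weq_sym)
next
  case (weq_trans u v w)
  show ?case using weq_trans.IH by (rule weq.weq_trans)
next
  case (weq_rel l r u v)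
  then have "weq ((p @ u) @ l @ (v @ q)) ((p @ u) @ r @ (v @ q))" by (rule weq.weq_rel)
  then show ?case by simp
qed

lemma weq_Cons: "weq u v \<Longrightarrow> weq (x # u) (x # v)"
  using weq_append_context[of u v "[x]" "[]"] by simp

lemma weq_square: "weq (x # x # v) v"
proof -
  have "([x, x], []) \<in> rels" by (cases x) (auto simp: rels_def)
  from weq_rel[OF this, of "[]" v] show ?thesis by simp
qed

lemma weq_reverse3: "weq (x # y # z # v) (z # y # x # v)"
proof -
  consider "x = z" | "x \<noteq> z" "y = x" | "x \<noteq> z" "y = z" | "x \<noteq> z" "y \<noteq> x" "y \<noteq> z"
    by blast
  then show ?thesis
  proof cases
    case 1
    then show ?thesis by (simp add: weq_refl)
  next
    case 2
    then show ?thesis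
      using weq_trans[OF weq_square[of x "z # v"] weq_sym[OF weq_Cons[OF weq_square[of x v]]]] by simp
  next
    case 3
    then show ?thesis
      using weq_trans[OF weq_Cons[OF weq_square[of z v]] weq_sym[OF weq_square[of z "x # v"]]] by simp
  next
    case 4
    then have "([x, y, z], [z, y, x]) \<in> rels \<or> ([z, y, x], [x, y, z]) \<in> rels"
      by (cases x; cases y; cases z) (auto simp: rels_def)
    then show ?thesis
      using weq_rel[of "[x, y, z]" "[z, y, x]" "[]" v] weq_rel[of "[z, y, x]" "[x, y, z]" "[]" v]
      by (auto intro: weq_sym)
  qed
qed

(* The flag records whether the first letter of the word stands at an even position. *)

fun parity_count :: "bool \<Rightarrow> gen \<Rightarrow> word \<Rightarrow> nat" where
  "parity_count e x [] = 0"
| "parity_count e x (y # w) = (if e \<and> y = x then 1 else 0) + parity_count (\<not> e) x w"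

lemma parity_count_append:
  "parity_count e x (u @ v) = parity_count e x u + parity_count (if even (length u) then e else \<not> e) x v"
  by (induction u arbitrary: e) auto

lemma odd_eq_iff_even_eq_not: "(odd i = e) \<longleftrightarrow> (even i = (\<not> e))"
  by auto

lemma parity_count_conv_sum:
  "parity_count e x w = (\<Sum>i<length w. if even i = e \<and> w ! i = x then 1 else 0)"
proof (induction w arbitrary: e)
  case (Cons y w)
  have "parity_count e x (y # w)
      = (if e \<and> y = x then 1 else 0) + (\<Sum>i<length w. if even i = (\<not> e) \<and> w ! i = x then 1 else 0)"
    using Cons.IH by simp
  also have "\<dots> = (\<Sum>i<length (y # w). if even i = e \<and> (y # w) ! i = x then 1 else 0)"
    unfolding length_Cons sum.lessThan_Suc_shift by (simp add: odd_eq_iff_even_eq_not[of _ e])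
  finally show ?case .
qed simp

definition balance :: "gen \<Rightarrow> word \<Rightarrow> int" where
  "balance x w = int (parity_count True x w) - int (parity_count False x w)"

lemma balance_rel: "(l, r) \<in> rels \<Longrightarrow> balance x (u @ l @ v) = balance x (u @ r @ v)"
  unfolding rels_def balance_def
  by (cases "even (length u)"; cases x) (auto simp: parity_count_append)

lemma weq_balance: "weq u v \<Longrightarrow> balance x u = balance x v"
  by (induction rule: weq.induct) (auto simp: balance_rel)

lemma weq_move_to_front:
  "parity_count True x w > 0 \<Longrightarrow> \<exists>r. weq w (x # r) \<and> length r < length w"
proof (induction w rule: induct_list012)
  case 1
  then show ?case by simp
next
  case (2 y)
  then have "y = x" by (simp split: if_splits)
  then show ?case by (auto intro: weq_refl)
next
  case (3 y z w)
  show ?case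
  proof (cases "y = x")
    case True
    then show ?thesis by (auto intro: weq_refl)
  next
    case False
    with "3.prems" have "parity_count True x w > 0" by simp
    with "3.IH"(1) obtain r where r: "weq w (x # r)" "length r < length w" by blast
    have "weq (y # z # w) (y # z # x # r)" using weq_Cons[OF weq_Cons[OF r(1)]] .
    then have "weq (y # z # w) (x # z # y # r)" using weq_reverse3 weq_trans by blast
    with r(2) show ?thesis by (intro exI[of _ "z # y # r"]) simp
  qed
qed

lemma weq_Nil_if_balanced: "(\<And>x. balance x w = 0) \<Longrightarrow> weq w []"
proof (induction w rule: length_induct)
  case (1 w)
  show ?case
  proof (cases w)
    case Nil
    then show ?thesis by (simp add: weq_refl)
  next
    case (Cons x w')
    with "1.prems"[of x] have "parity_count True x w' > 0" by (simp add: balance_def)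
    from weq_move_to_front[OF this] obtain r where r: "weq w' (x # r)" "length r < length w'"
      by blast
    have "weq w (x # x # r)" using Cons weq_Cons[OF r(1)] by simp
    then have "weq w r" using weq_square weq_trans by blast
    then have "balance y r = 0" for y using "1.prems" weq_balance by metis
    with "1.IH" Cons r(2) have "weq r []" by simp
    with \<open>weq w r\<close> show ?thesis using weq_trans by blast
  qed
qed

theorem weq_Nil_iff: "weq w [] \<longleftrightarrow> (\<forall>x. parity_count True x w = parity_count False x w)"
proof
  assume "weq w []"
  then have "balance x w = balance x []" for x by (rule weq_balance)
  then show "\<forall>x. parity_count True x w = parity_count False x w" by (simp add: balance_def)
next
  assume "\<forall>x. parity_count True x w = parity_count False x w"
  then show "weq w []" by (intro weq_Nil_if_balanced) (simp add: balance_def)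
qed

definition computes :: "nat \<Rightarrow> recf \<Rightarrow> (nat list \<Rightarrow> nat) \<Rightarrow> bool" where
  "computes k f F \<longleftrightarrow> (\<forall>xs y. length xs = k \<longrightarrow> (eval f xs y \<longleftrightarrow> y = F xs))"

inductive_cases eval_ZE: "eval Z xs y"
inductive_cases eval_SE: "eval S xs y"
inductive_cases eval_IdE: "eval (Id i) xs y"
inductive_cases eval_CnE: "eval (Cn f gs) xs y"
inductive_cases eval_Pr0E: "eval (Pr f g) (0 # xs) y"
inductive_cases eval_PrSE: "eval (Pr f g) (Suc n # xs) y"

lemma computes_eval: "computes k f F \<Longrightarrow> length xs = k \<Longrightarrow> eval f xs y \<longleftrightarrow> y = F xs"
  unfolding computes_def by blast

lemma computes_cong: "computes k f F \<Longrightarrow> (\<And>xs. length xs = k \<Longrightarrow> F xs = G xs) \<Longrightarrow> computes k f G"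
  unfolding computes_def by auto

lemma computes_Z: "computes k Z (\<lambda>_. 0)"
  unfolding computes_def by (auto intro: eval.intros elim: eval_ZE)

lemma computes_S: "computes 1 S (\<lambda>xs. Suc (xs ! 0))"
  unfolding computes_def by (auto simp: length_Suc_conv intro: eval.intros elim: eval_SE)

lemma computes_Id: "i < k \<Longrightarrow> computes k (Id i) (\<lambda>xs. xs ! i)"
  unfolding computes_def by (auto intro: eval.intros elim: eval_IdE)

lemma computes_Cn:
  assumes f: "computes m f F" and len: "length gs = m"
    and gs: "list_all2 (\<lambda>g G. computes k g G) gs Gs"
  shows "computes k (Cn f gs) (\<lambda>xs. F (map (\<lambda>G. G xs) Gs))"
  unfolding computes_def
proof (intro allI impI)
  fix xs :: "nat list" and y
  assume "length xs = k"
  with gs have args: "list_all2 (\<lambda>g y. eval g xs y) gs ys \<longleftrightarrow> ys = map (\<lambda>G. G xs) Gs" for ys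
    unfolding computes_def list_all2_conv_all_nth by (auto intro: nth_equalityI)
  have "length (map (\<lambda>G. G xs) Gs) = m"
    using gs len by (simp add: list_all2_lengthD)
  with f args show "eval (Cn f gs) xs y \<longleftrightarrow> y = F (map (\<lambda>G. G xs) Gs)"
    unfolding computes_def by (auto intro: eval.intros elim: eval_CnE)
qed

lemma computes_Cn1: "computes 1 f F \<Longrightarrow> computes k g G \<Longrightarrow> computes k (Cn f [g]) (\<lambda>xs. F [G xs])"
  using computes_Cn[where m=1 and gs="[g]" and Gs="[G]"] by simp

lemma computes_Cn2:
  "computes 2 f F \<Longrightarrow> computes k g1 G1 \<Longrightarrow> computes k g2 G2 \<Longrightarrow>
    computes k (Cn f [g1, g2]) (\<lambda>xs. F [G1 xs, G2 xs])"
  using computes_Cn[where m=2 and gs="[g1, g2]" and Gs="[G1, G2]"] by simp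

lemma computes_Pr:
  assumes f: "computes k f F" and g: "computes (Suc (Suc k)) g G"
    and "k' = Suc k" \<comment> \<open>so that the rule also matches arities written as numerals\<close>
    and H0: "\<And>xs. length xs = k \<Longrightarrow> H (0 # xs) = F xs"
    and HS: "\<And>n xs. length xs = k \<Longrightarrow> H (Suc n # xs) = G (n # H (n # xs) # xs)"
  shows "computes k' (Pr f g) H"
  unfolding computes_def \<open>k' = Suc k\<close>
proof (intro allI impI)
  fix xs' :: "nat list" and y
  assume "length xs' = Suc k"
  then obtain n xs where xs': "xs' = n # xs" and len: "length xs = k"
    by (auto simp: length_Suc_conv)
  have "eval (Pr f g) (n # xs) y \<longleftrightarrow> y = H (n # xs)" for y
  proof (induction n arbitrary: y)
    case 0
    show ?case using f H0[OF len] len unfolding computes_def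
      by (auto intro: eval.intros elim: eval_Pr0E)
  next
    case (Suc n)
    with g HS[OF len] len show ?case unfolding computes_def
      by (auto intro: eval.intros elim: eval_PrSE)
  qed
  then show "eval (Pr f g) xs' y \<longleftrightarrow> y = H xs'" using xs' by simp
qed

primrec const_rf :: "nat \<Rightarrow> recf" where
  "const_rf 0 = Z"
| "const_rf (Suc c) = Cn S [const_rf c]"

lemma computes_const_rf: "computes k (const_rf c) (\<lambda>_. c)"
  by (induction c) (auto simp: computes_Z dest: computes_Cn1[OF computes_S])

definition "add_rf = Pr (Id 0) (Cn S [Id 1])"

lemma computes_add_rf: "computes 2 add_rf (\<lambda>xs. xs ! 0 + xs ! 1)"
  unfolding add_rf_def
  by (rule computes_Pr[OF computes_Id computes_Cn1[OF computes_S computes_Id]]) auto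

definition "mul_rf = Pr Z (Cn add_rf [Id 1, Id 2])"

lemma computes_mul_rf: "computes 2 mul_rf (\<lambda>xs. xs ! 0 * xs ! 1)"
  unfolding mul_rf_def
  by (rule computes_Pr[OF computes_Z computes_Cn2[OF computes_add_rf computes_Id computes_Id]]) auto

definition "pred_rf = Pr Z (Id 0)"

lemma computes_pred_rf: "computes 1 pred_rf (\<lambda>xs. xs ! 0 - 1)"
  unfolding pred_rf_def
  by (rule computes_Pr[OF computes_Z computes_Id]) auto

definition "monus_rf = Cn (Pr (Id 0) (Cn pred_rf [Id 1])) [Id 1, Id 0]"

lemma computes_monus_rf: "computes 2 monus_rf (\<lambda>xs. xs ! 0 - xs ! 1)"
proof -
  have "computes 2 (Pr (Id 0) (Cn pred_rf [Id 1])) (\<lambda>xs. xs ! 1 - xs ! 0)"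
    by (rule computes_Pr[OF computes_Id computes_Cn1[OF computes_pred_rf computes_Id]]) auto
  from computes_Cn2[OF this computes_Id computes_Id] show ?thesis
    unfolding monus_rf_def by (rule computes_cong) auto
qed

(* [a = b] = 1 - ((a - b) + (b - a)) *)

definition "eq_rf = Cn monus_rf [const_rf 1, Cn add_rf [monus_rf, Cn monus_rf [Id 1, Id 0]]]"

lemma computes_eq_rf: "computes 2 eq_rf (\<lambda>xs. if xs ! 0 = xs ! 1 then 1 else 0)"
  unfolding eq_rf_def
  by (rule computes_cong[OF computes_Cn2[OF computes_monus_rf computes_const_rf
        computes_Cn2[OF computes_add_rf computes_monus_rf
          computes_Cn2[OF computes_monus_rf computes_Id computes_Id]]]]) auto

(* (m + 1) mod d = (m mod d + 1) * (1 - [m mod d + 1 = d]) and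
   (m + 1) div d = m div d + [(m + 1) mod d = 0], cf. mod_Suc and div_Suc *)
definition "mod_rf d =
  Pr Z (Cn mul_rf [Cn S [Id 1], Cn monus_rf [const_rf 1, Cn eq_rf [Cn S [Id 1], const_rf d]]])"

lemma computes_mod_rf: "computes 1 (mod_rf d) (\<lambda>xs. xs ! 0 mod d)"
  unfolding mod_rf_def
  by (rule computes_Pr[OF computes_Z computes_Cn2[OF computes_mul_rf
        computes_Cn1[OF computes_S computes_Id] computes_Cn2[OF computes_monus_rf computes_const_rf
          computes_Cn2[OF computes_eq_rf computes_Cn1[OF computes_S computes_Id] computes_const_rf]]]])
    (auto simp: mod_Suc)

definition "div_rf d = Pr Z (Cn add_rf [Id 1, Cn eq_rf [Cn (mod_rf d) [Cn S [Id 0]], Z]])"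

lemma computes_div_rf: "computes 1 (div_rf d) (\<lambda>xs. xs ! 0 div d)"
  unfolding div_rf_def
  by (rule computes_Pr[OF computes_Z computes_Cn2[OF computes_add_rf computes_Id
        computes_Cn2[OF computes_eq_rf computes_Cn1[OF computes_mod_rf
          computes_Cn1[OF computes_S computes_Id]] computes_Z]]])
    (auto simp: div_Suc)

definition "digit_rf d = Cn (mod_rf d) [Pr (Id 0) (Cn (div_rf d) [Id 1])]"

lemma computes_digit_rf: "computes 2 (digit_rf d) (\<lambda>xs. xs ! 1 div d ^ xs ! 0 mod d)"
proof -
  have "computes 2 (Pr (Id 0) (Cn (div_rf d) [Id 1])) (\<lambda>xs. xs ! 1 div d ^ xs ! 0)"
    by (rule computes_Pr[OF computes_Id computes_Cn1[OF computes_div_rf computes_Id]])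
      (auto simp: div_mult2_eq[symmetric] mult.commute)
  from computes_Cn1[OF computes_mod_rf this] show ?thesis
    unfolding digit_rf_def by simp
qed

definition "sum_rf t = Pr Z (Cn add_rf [Id 1, Cn t [Id 0, Id 2]])"

lemma computes_sum_rf:
  "computes 2 t T \<Longrightarrow> computes 2 (sum_rf t) (\<lambda>xs. \<Sum>i<xs ! 0. T [i, xs ! 1])"
  unfolding sum_rf_def
  by (rule computes_Pr[OF computes_Z computes_Cn2[OF computes_add_rf computes_Id
        computes_Cn2[OF _ computes_Id computes_Id]]]) auto

definition digit_parity_count :: "nat \<Rightarrow> nat \<Rightarrow> bool \<Rightarrow> nat \<Rightarrow> nat" where
  "digit_parity_count d c e n = (\<Sum>i<n. if even i = e \<and> n div d ^ i mod d = c then 1 else 0)"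

definition "digit_parity_rf d c e =
  Cn mul_rf [Cn eq_rf [Cn (mod_rf 2) [Id 0], const_rf (if e then 0 else 1)],
             Cn eq_rf [digit_rf d, const_rf c]]"

definition "digit_parity_count_rf d c e = Cn (sum_rf (digit_parity_rf d c e)) [Id 0, Id 0]"

lemma computes_digit_parity_count_rf:
  "computes 1 (digit_parity_count_rf d c e) (\<lambda>xs. digit_parity_count d c e (xs ! 0))"
proof -
  have "computes 2 (digit_parity_rf d c e)
      (\<lambda>xs. if even (xs ! 0) = e \<and> xs ! 1 div d ^ xs ! 0 mod d = c then 1 else 0)"
    unfolding digit_parity_rf_def
    by (rule computes_cong[OF computes_Cn2[OF computes_mul_rf
          computes_Cn2[OF computes_eq_rf computes_Cn1[OF computes_mod_rf computes_Id] computes_const_rf]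
          computes_Cn2[OF computes_eq_rf computes_digit_rf computes_const_rf]]])
      (auto simp: even_iff_mod_2_eq_zero)
  from computes_Cn2[OF computes_sum_rf[OF this] computes_Id computes_Id] show ?thesis
    unfolding digit_parity_count_rf_def digit_parity_count_def by (rule computes_cong) simp_all
qed

definition "balanced_digit_rf c =
  Cn eq_rf [digit_parity_count_rf 4 c True, digit_parity_count_rf 4 c False]"

definition "word_problem_rf =
  Cn mul_rf [balanced_digit_rf 1, Cn mul_rf [balanced_digit_rf 2, balanced_digit_rf 3]]"

lemma computes_word_problem_rf:
  "computes 1 word_problem_rf (\<lambda>xs. if \<forall>c\<in>{1, 2, 3}.
     digit_parity_count 4 c True (xs ! 0) = digit_parity_count 4 c False (xs ! 0) then 1 else 0)"
proof -
  have "computes 1 (balanced_digit_rf c) (\<lambda>xs.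
      if digit_parity_count 4 c True (xs ! 0) = digit_parity_count 4 c False (xs ! 0) then 1 else 0)" for c
    unfolding balanced_digit_rf_def
    by (rule computes_cong[OF computes_Cn2[OF computes_eq_rf
          computes_digit_parity_count_rf computes_digit_parity_count_rf]]) simp
  from computes_Cn2[OF computes_mul_rf this computes_Cn2[OF computes_mul_rf this this]] show ?thesis
    unfolding word_problem_rf_def by (rule computes_cong) simp
qed

lemma gen_code_eq_iff: "gen_code x = gen_code y \<longleftrightarrow> x = y"
  by (cases x; cases y) simp_all

lemma range_gen_code: "range gen_code = {1, 2, 3}"
proof -
  have "UNIV = {A, B, C}" using gen.exhaust by blast
  then have "range gen_code = gen_code ` {A, B, C}" by (rule arg_cong)
  then show ?thesis by simp
qed

lemma length_le_enc: "length w \<le> enc w"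
proof (induction w)
  case (Cons x w)
  then show ?case by (cases x) auto
qed simp

lemma enc_digit: "enc w div 4 ^ i mod 4 = (if i < length w then gen_code (w ! i) else 0)"
proof (induction w arbitrary: i)
  case (Cons x w)
  have "gen_code x < 4" by (cases x) simp_all
  then show ?case
    using Cons.IH[of "i - 1"] by (cases i) (simp_all add: div_mult2_eq)
qed simp

lemma digit_parity_count_enc: "digit_parity_count 4 (gen_code x) e (enc w) = parity_count e x w"
proof -
  have "gen_code x \<noteq> 0" by (cases x) simp_all
  then have "digit_parity_count 4 (gen_code x) e (enc w)
      = (\<Sum>i<length w. if even i = e \<and> enc w div 4 ^ i mod 4 = gen_code x then 1 else 0)"
    unfolding digit_parity_count_def
    by (intro sum.mono_neutral_right) (auto simp: enc_digit length_le_enc)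
  also have "\<dots> = parity_count e x w"
    unfolding parity_count_conv_sum by (intro sum.cong) (auto simp: enc_digit gen_code_eq_iff)
  finally show ?thesis .
qed

lemma weq_Nil_iff_digit_parity_count:
  "weq w [] \<longleftrightarrow>
    (\<forall>c\<in>{1, 2, 3}. digit_parity_count 4 c True (enc w) = digit_parity_count 4 c False (enc w))"
  unfolding weq_Nil_iff range_gen_code[symmetric] by (simp add: digit_parity_count_enc)

theorem mainTheorem10:
  shows "\<exists>f :: recf. \<forall>w :: word. \<forall>y. eval f [enc w] y \<longleftrightarrow> y = (if weq w [] then 1 else 0)"
proof (intro exI allI)
  fix w y
  show "eval word_problem_rf [enc w] y \<longleftrightarrow> y = (if weq w [] then 1 else 0)"
    using computes_eval[OF computes_word_problem_rf, of "[enc w]" y]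
    by (simp add: weq_Nil_iff_digit_parity_count)
qed

end
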